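(* Let $P,R_A,R_B>0$, $q>0$, $\mathbf{w}\in\mathbb{R}^n_{++}$ with $W=\sum_b w_b$. Suppose $\mathbf{p}\in\Delta_n(P)$ satisfies $$qR_B-P>\frac{R_A}{2}\left[1+\sqrt{1+\frac{2W}{R_A}\max_{b}\frac{p_b}{w_b}}\right].$$ Then $\pi_A(\mathbf{p},R_A,R_B)=\dfrac{W R_A}{2(qR_B-P)}$; in particular this value does not depend on $\mathbf{p}$. Moreover, if some $\mathbf{p}\in\Delta_n(P)$ satisfies the displayed inequality, then so does $\mathbf{p}^*=\frac{P}{W}\mathbf{w}$.
   Context: **Battlefields.** There are $n$ battlefields $\mathcal{B}=\{1,\dots,n\}$. Battlefield $b$ has value $w_b>0$, common to both players, and $W=\sum_b w_b$. **Pre-allocation.** Player $A$ fixes a pre-allocation $\mathbf{p}\in\Delta_n(P):=\{\mathbf{p}\in\mathbb{R}^n_+:\sum_b p_b=P\}$. **Stage-2 game.** Players $A$ and $B$ have real-time budgets $R_A$ and $R_B$. The constant $q>0$ is the effectiveness of $B$'s resources relative to $A$'s. Each player $i\in\{A,B\}$ simultaneously chooses a distribution $F_i$ over allocations $\mathbf{x}_i\in\mathbb{R}^n_+$ with $\mathbb{E}[\sum_b x_{i,b}]\le R_i$. Player $A$ wins battlefield $b$ if $x_{A,b}+p_b>q\,x_{B,b}$; otherwise $B$ wins it. The tie-breaking rule is arbitrary. $A$'s payoff is the expected total value won, and $B$'s payoff is $W$ minus this. **Equilibrium payoff.** The game has unique equilibrium payoffs. $A$'s equilibrium payoff is denoted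 $\pi_A(\mathbf{p},R_A,R_B)$. *)

theory Defs
  imports "HOL-Probability.Probability"
begin

definition preAlloc :: "real \<Rightarrow> (real^'n) set" where
  "preAlloc P = {p. (\<forall>b. p$b \<ge> 0) \<and> (\<Sum>b\<in>UNIV. p$b) = P}"

definition feasible :: "real \<Rightarrow> (real^'n) measure \<Rightarrow> bool" where
  "feasible R F \<longleftrightarrow> prob_space F \<and> sets F = sets borel \<and>
     (AE x in F. \<forall>b. x$b \<ge> 0) \<and>
     (\<integral>\<^sup>+ x. ennreal (\<Sum>b\<in>UNIV. x$b) \<partial>F) \<le> ennreal R"

definition payoffA :: "real^'n \<Rightarrow> real \<Rightarrow> real^'n \<Rightarrow> (real^'n) measure \<Rightarrow> (real^'n) measure \<Rightarrow> real" where
  "payoffA w q p FA FB =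
     (\<integral> xy. (\<Sum>b\<in>UNIV. if (fst xy)$b + p$b > q * (snd xy)$b then w$b else 0) \<partial>(FA \<Otimes>\<^sub>M FB))"

definition is_equilibrium :: "real^'n \<Rightarrow> real \<Rightarrow> real^'n \<Rightarrow> real \<Rightarrow> real \<Rightarrow>
    (real^'n) measure \<Rightarrow> (real^'n) measure \<Rightarrow> bool" where
  "is_equilibrium w q p RA RB FA FB \<longleftrightarrow>
     feasible RA FA \<and> feasible RB FB \<and>
     (\<forall>FA'. feasible RA FA' \<longrightarrow> payoffA w q p FA' FB \<le> payoffA w q p FA FB) \<and>
     (\<forall>FB'. feasible RB FB' \<longrightarrow> payoffA w q p FA FB' \<ge> payoffA w q p FA FB)"

text \<open>Equilibrium payoff of A (the game has unique equilibrium payoffs).\<close>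
definition piA :: "real^'n \<Rightarrow> real \<Rightarrow> real^'n \<Rightarrow> real \<Rightarrow> real \<Rightarrow> real" where
  "piA w q p RA RB = (THE v. \<exists>FA FB. is_equilibrium w q p RA RB FA FB \<and> v = payoffA w q p FA FB)"

definition cond_ineq :: "real^'n \<Rightarrow> real \<Rightarrow> real \<Rightarrow> real \<Rightarrow> real \<Rightarrow> real^'n \<Rightarrow> bool" where
  "cond_ineq w q P RA RB p \<longleftrightarrow>
     q * RB - P > RA / 2 * (1 + sqrt (1 + 2 * (\<Sum>b\<in>UNIV. w$b) / RA * (MAX b. p$b / w$b)))"

end

theory Submission
  imports Defs
begin

text \<open>Let \<open>D = q R\<^sub>B - P\<close>, \<open>v\<^sub>b = D w\<^sub>b / W\<close> and \<open>c = R\<^sub>A / D\<close>. If B spreads her effective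
force \<open>q y\<^sub>b\<close> uniformly over \<open>[p\<^sub>b, p\<^sub>b + 2 v\<^sub>b]\<close>, battlefield \<open>b\<close> is worth at most
\<open>w\<^sub>b x\<^sub>b / (2 v\<^sub>b) = W x\<^sub>b / (2D)\<close> to A, so every A-strategy earns at most \<open>W R\<^sub>A / (2D)\<close>.
If A plays 0 with probability \<open>1 - c\<close> and otherwise uniformly on \<open>[0, 2 v\<^sub>b / c]\<close>, then A wins
\<open>b\<close> with probability at least \<open>c (1 - (q y\<^sub>b - p\<^sub>b) / (2 v\<^sub>b))\<close> as long as
\<open>c p\<^sub>b \<le> 2 v\<^sub>b (1 - c)\<close>; summing, every B-strategy concedes at least \<open>c W / 2 = W R\<^sub>A / (2D)\<close>.
The hypothesis of the theorem, squared, gives this covering condition for all \<open>b\<close>; it depends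
on \<open>p\<close> only through \<open>max p\<^sub>b / w\<^sub>b\<close>, which is smallest, namely \<open>P / W\<close>, for the proportional
pre-allocation.\<close>

abbreviation uniform01 :: "real measure" where
  "uniform01 \<equiv> uniform_measure lborel {0..1}"

lemma prob_space_uniform01: "prob_space uniform01"
  by (rule prob_space_uniform_measure) auto

lemma measure_uniform01: "B \<in> sets borel \<Longrightarrow> measure uniform01 B = measure lborel ({0..1} \<inter> B)"
  by (subst measure_uniform_measure) auto

lemma measure_uniform01_lessThan_le: "measure uniform01 {..<a} \<le> max 0 a"
  and measure_uniform01_atMost_le: "measure uniform01 {..a} \<le> max 0 a"
proof -
  have f: "{0..max 0 a} \<in> fmeasurable lborel" by (metis cbox_interval fmeasurable_cbox)
  have "measure lborel ({0..1} \<inter> {..<a}) \<le> measure lborel {0..max 0 a}"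
    by (rule measure_mono_fmeasurable[OF _ _ f]) auto
  then show "measure uniform01 {..<a} \<le> max 0 a" by (simp add: measure_uniform01)
  have "measure lborel ({0..1} \<inter> {..a}) \<le> measure lborel {0..max 0 a}"
    by (rule measure_mono_fmeasurable[OF _ _ f]) auto
  then show "measure uniform01 {..a} \<le> max 0 a" by (simp add: measure_uniform01)
qed

lemma nn_integral_uniform01_has_integral:
  fixes f :: "real \<Rightarrow> real"
  assumes [measurable]: "f \<in> borel_measurable borel"
    and nonneg: "\<And>t. t \<in> {0..1} \<Longrightarrow> 0 \<le> f t" and I: "(f has_integral I) {0..1}"
  shows "(\<integral>\<^sup>+t. ennreal (f t) \<partial>uniform01) = ennreal I"
proof -
  have "(\<integral>\<^sup>+t. ennreal (f t) \<partial>uniform01)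
      = (\<integral>\<^sup>+t. ennreal (f t) * indicator {0..1} t \<partial>lborel) / emeasure lborel {0..1::real}"
    by (rule nn_integral_uniform_measure) auto
  also have "\<dots> = ennreal I"
    using nn_integral_has_integral_lebesgue'[OF nonneg I] by (simp add: divide_ennreal_def)
  finally show ?thesis .
qed

lemma integral_uniform01_weighted_indicators:
  fixes w :: "'n::finite \<Rightarrow> real"
  assumes "\<And>b. A b \<in> sets borel"
  shows "(\<integral>t. (\<Sum>b\<in>UNIV. w b * indicator (A b) t) \<partial>uniform01) = (\<Sum>b\<in>UNIV. w b * measure uniform01 (A b))"
proof -
  interpret prob_space uniform01 by (rule prob_space_uniform01)
  have "integrable uniform01 (indicator (A b) :: real \<Rightarrow> real)" for b
    using assms emeasure_finite[of "A b"]
    by (intro integrable_real_indicator) (auto simp: less_top[symmetric] simp del: emeasure_uniform_measure)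
  then have "(\<integral>t. (\<Sum>b\<in>UNIV. w b * indicator (A b) t) \<partial>uniform01)
      = (\<Sum>b\<in>UNIV. \<integral>t. w b * indicator (A b) t \<partial>uniform01)"
    by (intro Bochner_Integration.integral_sum integrable_mult_right)
  then show ?thesis by (simp del: measure_uniform_measure emeasure_uniform_measure)
qed

lemma vec_nth_borel_measurable[measurable]: "(\<lambda>x::real^'n. x $ b) \<in> borel_measurable borel"
  by (intro borel_measurable_continuous_onI continuous_intros)

lemma feasible_integrable_total:
  assumes "feasible R F"
  shows "integrable F (\<lambda>x. \<Sum>b\<in>UNIV. x$b)"
    and "R \<ge> 0 \<Longrightarrow> (\<integral>x. (\<Sum>b\<in>UNIV. x$b) \<partial>F) \<le> R"
proof -
  have F: "sets F = sets borel" "AE x in F. \<forall>b. x$b \<ge> 0"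
    "(\<integral>\<^sup>+ x. ennreal (\<Sum>b\<in>UNIV. x$b) \<partial>F) \<le> ennreal R"
    using assms unfolding feasible_def by auto
  have meas: "(\<lambda>x::real^'a. \<Sum>b\<in>UNIV. x$b) \<in> borel_measurable F"
    unfolding measurable_cong_sets[OF F(1) refl] by measurable
  have nonneg: "AE x in F. 0 \<le> (\<Sum>b\<in>UNIV. x$b)"
    using F(2) by eventually_elim (simp add: sum_nonneg)
  have "(\<integral>\<^sup>+ x. ennreal (norm (\<Sum>b\<in>UNIV. x$b)) \<partial>F) = (\<integral>\<^sup>+ x. ennreal (\<Sum>b\<in>UNIV. x$b) \<partial>F)"
    using nonneg by (auto intro!: nn_integral_cong_AE elim!: eventually_mono)
  also have "\<dots> < \<infinity>" using F(3) by (simp add: le_less_trans)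
  finally show "integrable F (\<lambda>x. \<Sum>b\<in>UNIV. x$b)"
    by (intro integrableI_bounded meas)
  assume "R \<ge> 0"
  have "(\<integral>x. (\<Sum>b\<in>UNIV. x$b) \<partial>F) = enn2real (\<integral>\<^sup>+ x. ennreal (\<Sum>b\<in>UNIV. x$b) \<partial>F)"
    by (rule integral_eq_nn_integral[OF meas nonneg])
  also have "\<dots> \<le> enn2real (ennreal R)"
    using F(3) by (intro enn2real_mono) auto
  finally show "(\<integral>x. (\<Sum>b\<in>UNIV. x$b) \<partial>F) \<le> R" using \<open>R \<ge> 0\<close> by simp
qed

lemma feasible_distr_uniform01:
  fixes f :: "real \<Rightarrow> real^'n"
  assumes [measurable]: "f \<in> borel_measurable borel"
    and nonneg: "\<And>t b. t \<in> {0..1} \<Longrightarrow> 0 \<le> f t $ b"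
    and total: "((\<lambda>t. \<Sum>b\<in>UNIV. f t $ b) has_integral R) {0..1}"
  shows "feasible R (distr uniform01 borel f)"
  unfolding feasible_def
proof (intro conjI)
  show "prob_space (distr uniform01 borel f)"
    by (intro prob_space.prob_space_distr prob_space_uniform01) measurable
  have "AE t in uniform01. \<forall>b. f t $ b \<ge> 0"
    using nonneg by (intro AE_uniform_measureI AE_I2) auto
  then show "AE x in distr uniform01 borel f. \<forall>b. x $ b \<ge> 0"
    by (subst AE_distr_iff) auto
  have "(\<integral>\<^sup>+ x. ennreal (\<Sum>b\<in>UNIV. x$b) \<partial>distr uniform01 borel f)
      = (\<integral>\<^sup>+ t. ennreal (\<Sum>b\<in>UNIV. f t $ b) \<partial>uniform01)"
    by (subst nn_integral_distr) auto
  also have "\<dots> = ennreal R"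
    using nonneg by (intro nn_integral_uniform01_has_integral total) (auto intro: sum_nonneg)
  finally show "(\<integral>\<^sup>+ x. ennreal (\<Sum>b\<in>UNIV. x$b) \<partial>distr uniform01 borel f) \<le> ennreal R"
    by simp
qed simp

definition won_value :: "real^'n \<Rightarrow> real \<Rightarrow> real^'n \<Rightarrow> real^'n \<Rightarrow> real^'n \<Rightarrow> real" where
  "won_value w q p x y = (\<Sum>b\<in>UNIV. if x$b + p$b > q * y$b then w$b else 0)"

lemma won_value_measurable[measurable]:
  "(\<lambda>xy. won_value w q p (fst xy) (snd xy)) \<in> borel_measurable (borel \<Otimes>\<^sub>M borel)"
  unfolding won_value_def by measurable

lemma won_value_measurable_fst: "(\<lambda>x. won_value w q p x y) \<in> borel_measurable borel"
  unfolding won_value_def by measurable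

lemma won_value_measurable_snd: "won_value w q p x \<in> borel_measurable borel"
  unfolding won_value_def by measurable

lemma abs_won_value_le: "\<bar>won_value w q p x y\<bar> \<le> (\<Sum>b\<in>UNIV. \<bar>w$b\<bar>)"
  unfolding won_value_def by (rule order.trans[OF sum_abs sum_mono]) auto

lemma payoffA_iterated_integrals:
  assumes "feasible RA FA" "feasible RB FB"
  shows "payoffA w q p FA FB = (\<integral>x. (\<integral>y. won_value w q p x y \<partial>FB) \<partial>FA)"
    and "payoffA w q p FA FB = (\<integral>y. (\<integral>x. won_value w q p x y \<partial>FA) \<partial>FB)"
    and "integrable FA (\<lambda>x. \<integral>y. won_value w q p x y \<partial>FB)"
    and "integrable FB (\<lambda>y. \<integral>x. won_value w q p x y \<partial>FA)"
proof -
  have A: "prob_space FA" "sets FA = sets borel" and B: "prob_space FB" "sets FB = sets borel"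
    using assms unfolding feasible_def by auto
  interpret pair_prob_space FA FB
    using A B by (simp add: pair_prob_space_def pair_sigma_finite_def prob_space_imp_sigma_finite)
  have sets: "sets (FA \<Otimes>\<^sub>M FB) = sets (borel \<Otimes>\<^sub>M borel)"
    by (rule sets_pair_measure_cong[OF A(2) B(2)])
  have meas: "case_prod (won_value w q p) \<in> borel_measurable (FA \<Otimes>\<^sub>M FB)"
    unfolding measurable_cong_sets[OF sets refl] case_prod_beta' by measurable
  have int: "integrable (FA \<Otimes>\<^sub>M FB) (case_prod (won_value w q p))"
  proof (rule integrable_const_bound[where B="\<Sum>b\<in>UNIV. \<bar>w$b\<bar>"])
    show "AE xy in FA \<Otimes>\<^sub>M FB. norm (case_prod (won_value w q p) xy) \<le> (\<Sum>b\<in>UNIV. \<bar>w$b\<bar>)"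
      by (intro AE_I2) (simp add: case_prod_beta' abs_won_value_le)
  qed (rule meas)
  have payoff: "payoffA w q p FA FB = integral\<^sup>L (FA \<Otimes>\<^sub>M FB) (case_prod (won_value w q p))"
    unfolding payoffA_def won_value_def by (simp add: case_prod_beta')
  show "payoffA w q p FA FB = (\<integral>x. (\<integral>y. won_value w q p x y \<partial>FB) \<partial>FA)"
    using integral_fst[OF int] payoff by simp
  show "payoffA w q p FA FB = (\<integral>y. (\<integral>x. won_value w q p x y \<partial>FA) \<partial>FB)"
    using integral_snd[OF int] payoff by simp
  show "integrable FA (\<lambda>x. \<integral>y. won_value w q p x y \<partial>FB)" using integrable_fst[OF int] .
  show "integrable FB (\<lambda>y. \<integral>x. won_value w q p x y \<partial>FA)" using integrable_snd[OF int] .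
qed

lemma piA_eq_payoffA:
  assumes eq: "is_equilibrium w q p RA RB FA FB"
  shows "piA w q p RA RB = payoffA w q p FA FB"
  unfolding piA_def
proof (rule the_equality)
  show "\<exists>FA' FB'. is_equilibrium w q p RA RB FA' FB' \<and> payoffA w q p FA FB = payoffA w q p FA' FB'"
    using eq by blast
  fix v assume "\<exists>FA' FB'. is_equilibrium w q p RA RB FA' FB' \<and> v = payoffA w q p FA' FB'"
  then obtain FA' FB' where eq': "is_equilibrium w q p RA RB FA' FB'" and v: "v = payoffA w q p FA' FB'"
    by blast
  have "payoffA w q p FA FB' \<le> payoffA w q p FA' FB'" "payoffA w q p FA FB \<le> payoffA w q p FA FB'"
    "payoffA w q p FA' FB \<le> payoffA w q p FA FB" "payoffA w q p FA' FB' \<le> payoffA w q p FA' FB"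
    using eq eq' unfolding is_equilibrium_def by blast+
  then show "v = payoffA w q p FA FB" using v by linarith
qed

lemma piA_eq_saddle_value:
  assumes "feasible RA FA" "feasible RB FB"
    and A_guarantees: "\<And>FB'. feasible RB FB' \<Longrightarrow> v \<le> payoffA w q p FA FB'"
    and B_guarantees: "\<And>FA'. feasible RA FA' \<Longrightarrow> payoffA w q p FA' FB \<le> v"
  shows "piA w q p RA RB = v"
proof -
  have "payoffA w q p FA FB = v"
    using A_guarantees[OF assms(2)] B_guarantees[OF assms(1)] by linarith
  then have "is_equilibrium w q p RA RB FA FB"
    unfolding is_equilibrium_def using assms by auto
  then show ?thesis using \<open>payoffA w q p FA FB = v\<close> by (simp add: piA_eq_payoffA)
qed

text \<open>The equilibrium strategies, with \<open>v\<^sub>b = share w D b\<close>, couple all battlefields through a single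
uniform variable.\<close>

definition share :: "real^'n \<Rightarrow> real \<Rightarrow> 'n \<Rightarrow> real" where
  "share w D b = D * w$b / (\<Sum>b\<in>UNIV. w$b)"

definition allocB :: "real^'n \<Rightarrow> real \<Rightarrow> real^'n \<Rightarrow> real \<Rightarrow> real \<Rightarrow> real^'n" where
  "allocB w q p D t = (\<chi> b. (p$b + 2 * share w D b * t) / q)"

definition allocA :: "real^'n \<Rightarrow> real \<Rightarrow> real \<Rightarrow> real \<Rightarrow> real^'n" where
  "allocA w D c s = (\<chi> b. (2 * share w D b / c) * max 0 (s - (1 - c)))"

definition strategyB :: "real^'n \<Rightarrow> real \<Rightarrow> real^'n \<Rightarrow> real \<Rightarrow> (real^'n) measure" where
  "strategyB w q p D = distr uniform01 borel (allocB w q p D)"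

definition strategyA :: "real^'n \<Rightarrow> real \<Rightarrow> real \<Rightarrow> (real^'n) measure" where
  "strategyA w D c = distr uniform01 borel (allocA w D c)"

lemma allocB_measurable[measurable]: "allocB w q p D \<in> borel_measurable borel"
  unfolding allocB_def divide_inverse by (intro borel_measurable_continuous_onI continuous_intros)

lemma allocA_measurable[measurable]: "allocA w D c \<in> borel_measurable borel"
  unfolding allocA_def by (intro borel_measurable_continuous_onI continuous_intros)

lemma sum_share:
  assumes "\<forall>b. w$b > 0"
  shows "(\<Sum>b\<in>UNIV. share w D b) = D"
proof -
  have "(\<Sum>b\<in>UNIV. w$b) > 0" using assms by (intro sum_pos) auto
  then show ?thesis
    unfolding share_def by (simp add: sum_divide_distrib[symmetric] sum_distrib_left[symmetric])
qed

lemma share_pos: "\<forall>b. w$b > 0 \<Longrightarrow> D > 0 \<Longrightarrow> share w D b > 0"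
  unfolding share_def by (intro divide_pos_pos mult_pos_pos sum_pos) auto

lemma weight_div_share:
  assumes "\<forall>b. w$b > 0" "D > 0"
  shows "w$b * (x / (2 * share w D b)) = (\<Sum>b\<in>UNIV. w$b) / (2 * D) * x"
proof -
  have "(\<Sum>b\<in>UNIV. w$b) > 0" "w$b > 0" using assms by (auto intro: sum_pos)
  then show ?thesis using assms(2) unfolding share_def by (simp add: field_simps)
qed

lemma feasible_strategyB:
  assumes "q > 0" "D > 0" "\<forall>b. w$b > 0" "p \<in> preAlloc P" "RB = (P + D) / q"
  shows "feasible RB (strategyB w q p D)"
  unfolding strategyB_def
proof (rule feasible_distr_uniform01)
  have p: "\<forall>b. p$b \<ge> 0" "(\<Sum>b\<in>UNIV. p$b) = P" using assms(4) unfolding preAlloc_def by auto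
  show "0 \<le> allocB w q p D t $ b" if "t \<in> {0..1}" for t b
    using that assms p share_pos[OF assms(3,2)] by (auto simp: allocB_def less_imp_le)
  have "(\<Sum>b\<in>UNIV. allocB w q p D t $ b) = ((\<Sum>b\<in>UNIV. p$b) + 2 * t * (\<Sum>b\<in>UNIV. share w D b)) / q" for t
    unfolding allocB_def by (simp add: sum_divide_distrib[symmetric] sum.distrib sum_distrib_left algebra_simps)
  then have "(\<Sum>b\<in>UNIV. allocB w q p D t $ b) = (P + 2 * D * t) / q" for t
    using p sum_share[OF assms(3)] by (simp add: mult.commute)
  moreover have "((\<lambda>t. (P + 2 * D * t) / q) has_integral RB) {0..1}"
  proof -
    have "((\<lambda>t. (P + 2 * D * t) / q) has_integral
        (\<lambda>t. (P * t + D * t\<^sup>2) / q) 1 - (\<lambda>t. (P * t + D * t\<^sup>2) / q) 0) {0..1}"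
      using assms(1) by (intro fundamental_theorem_of_calculus)
        (auto simp: has_real_derivative_iff_has_vector_derivative[symmetric] field_simps
          intro!: derivative_eq_intros)
    then show ?thesis using assms(5) by (simp add: add_divide_distrib)
  qed
  ultimately show "((\<lambda>t. \<Sum>b\<in>UNIV. allocB w q p D t $ b) has_integral RB) {0..1}" by simp
qed simp

lemma feasible_strategyA:
  assumes "0 < c" "c < 1" "D > 0" "\<forall>b. w$b > 0" "RA = D * c"
  shows "feasible RA (strategyA w D c)"
  unfolding strategyA_def
proof (rule feasible_distr_uniform01)
  show "0 \<le> allocA w D c s $ b" for s b
    using assms share_pos[OF assms(4,3)] by (auto simp: allocA_def less_imp_le)
  have "(\<Sum>b\<in>UNIV. allocA w D c s $ b) = (2 * D / c) * max 0 (s - (1 - c))" for s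
    using sum_share[OF assms(4)]
    by (simp add: allocA_def sum_divide_distrib[symmetric] sum_distrib_right[symmetric]
        sum_distrib_left[symmetric])
  moreover have "((\<lambda>s. (2 * D / c) * max 0 (s - (1 - c))) has_integral RA) {0..1}"
  proof -
    have "((\<lambda>s. (2 * D / c) * (s - (1 - c))) has_integral
        (\<lambda>s. D / c * (s - (1 - c))\<^sup>2) 1 - (\<lambda>s. D / c * (s - (1 - c))\<^sup>2) (1 - c)) {1 - c..1}"
      using assms(1,2) by (intro fundamental_theorem_of_calculus)
        (auto simp: has_real_derivative_iff_has_vector_derivative[symmetric] field_simps
          intro!: derivative_eq_intros)
    then have "((\<lambda>s. (2 * D / c) * (s - (1 - c))) has_integral RA) {1 - c..1}"
      using assms(1,2,5) by (simp add: power2_eq_square)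
    then have "((\<lambda>s. (2 * D / c) * max 0 (s - (1 - c))) has_integral RA) {1 - c..1}"
      by (rule has_integral_eq[rotated]) auto
    moreover have "((\<lambda>s. (2 * D / c) * max 0 (s - (1 - c))) has_integral 0) {0..1 - c}"
      by (rule has_integral_eq[OF _ has_integral_0]) auto
    ultimately show ?thesis
      using has_integral_combine[of 0 "1 - c" 1 _ 0 RA] assms(1,2) by simp
  qed
  ultimately show "((\<lambda>s. \<Sum>b\<in>UNIV. allocA w D c s $ b) has_integral RA) {0..1}" by simp
qed simp

lemma integral_won_value_strategyB:
  assumes "q > 0" "D > 0" "\<forall>b. w$b > 0"
  shows "(\<integral>y. won_value w q p x y \<partial>strategyB w q p D)
       = (\<Sum>b\<in>UNIV. w$b * measure uniform01 {..< x$b / (2 * share w D b)})"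
proof -
  have wins: "x$b + p$b > q * allocB w q p D t $ b \<longleftrightarrow> t < x$b / (2 * share w D b)" for t b
    using assms share_pos[OF assms(3,2), of b] by (simp add: allocB_def pos_less_divide_eq mult.commute)
  have "(\<integral>y. won_value w q p x y \<partial>strategyB w q p D) = (\<integral>t. won_value w q p x (allocB w q p D t) \<partial>uniform01)"
    unfolding strategyB_def by (rule integral_distr[OF _ won_value_measurable_snd]) measurable
  also have "\<dots> = (\<integral>t. (\<Sum>b\<in>UNIV. w$b * indicator {..< x$b / (2 * share w D b)} t) \<partial>uniform01)"
    unfolding won_value_def wins
    by (intro Bochner_Integration.integral_cong refl sum.cong) (simp add: indicator_def)
  also have "\<dots> = (\<Sum>b\<in>UNIV. w$b * measure uniform01 {..< x$b / (2 * share w D b)})"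
    by (rule integral_uniform01_weighted_indicators) auto
  finally show ?thesis .
qed

lemma integral_won_value_strategyA:
  "(\<integral>x. won_value w q p x y \<partial>strategyA w D c)
     = (\<Sum>b\<in>UNIV. w$b * measure uniform01 {s. (2 * share w D b / c) * max 0 (s - (1 - c)) + p$b > q * y$b})"
proof -
  have "(\<integral>x. won_value w q p x y \<partial>strategyA w D c) = (\<integral>s. won_value w q p (allocA w D c s) y \<partial>uniform01)"
    unfolding strategyA_def by (rule integral_distr[OF _ won_value_measurable_fst]) measurable
  also have "\<dots> = (\<integral>s. (\<Sum>b\<in>UNIV. w$b *
      indicator {s. (2 * share w D b / c) * max 0 (s - (1 - c)) + p$b > q * y$b} s) \<partial>uniform01)"
    unfolding won_value_def allocA_def
    by (intro Bochner_Integration.integral_cong refl sum.cong) (simp add: indicator_def)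
  also have "\<dots> = (\<Sum>b\<in>UNIV. w$b *
      measure uniform01 {s. (2 * share w D b / c) * max 0 (s - (1 - c)) + p$b > q * y$b})"
    by (rule integral_uniform01_weighted_indicators, rule borel_open,
        intro open_Collect_less continuous_intros)
  finally show ?thesis .
qed

lemma measure_uniform01_allocA_wins_ge:
  assumes "v > 0" "0 < c" "c < 1" "c * p / (2 * v) \<le> 1 - c" "z \<ge> 0"
  shows "c * (1 - (z - p) / (2 * v)) \<le> measure uniform01 {s. (2 * v / c) * max 0 (s - (1 - c)) + p > z}"
    (is "_ \<le> measure uniform01 ?wins")
proof -
  interpret prob_space uniform01 by (rule prob_space_uniform01)
  have "?wins \<in> sets borel"
    by (rule borel_open) (intro open_Collect_less continuous_intros)
  then have wins_sets: "?wins \<in> sets uniform01" by simp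
  show ?thesis
  proof (cases "z < p")
    case True
    have "?wins = space uniform01"
    proof (intro set_eqI)
      fix s
      have "0 \<le> (2 * v / c) * max 0 (s - (1 - c))" using assms by simp
      then show "s \<in> ?wins \<longleftrightarrow> s \<in> space uniform01" using True by simp
    qed
    then have "measure uniform01 ?wins = 1" by simp
    moreover have "c * (1 - (z - p) / (2 * v)) = c + c * p / (2 * v) - c * z / (2 * v)"
      using assms by (simp add: field_simps)
    moreover have "0 \<le> c * z / (2 * v)" using assms by simp
    ultimately show ?thesis using assms by linarith
  next
    case False
    define a where "a = 1 - c + c * (z - p) / (2 * v)"
    have "0 \<le> c * (z - p) / (2 * v)" using False assms by simp
    then have "0 \<le> a" using assms unfolding a_def by simp
    have "{a<..} \<subseteq> ?wins"
    proof
      fix s assume "s \<in> {a<..}"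
      then have s: "c * (z - p) / (2 * v) < s - (1 - c)" unfolding a_def by simp
      then have "(2 * v / c) * (c * (z - p) / (2 * v)) < (2 * v / c) * (s - (1 - c))"
        using assms by (intro mult_strict_left_mono) auto
      moreover have "(2 * v / c) * (c * (z - p) / (2 * v)) = z - p" using assms by simp
      ultimately show "s \<in> ?wins"
        using s \<open>0 \<le> c * (z - p) / (2 * v)\<close> by simp
    qed
    then have "measure uniform01 {a<..} \<le> measure uniform01 ?wins"
      by (rule finite_measure_mono[OF _ wins_sets])
    moreover have "{a<..} = space uniform01 - {..a}" by auto
    then have "measure uniform01 {a<..} = 1 - measure uniform01 {..a}"
      using prob_compl[of "{..a}"] by simp
    moreover have "1 - a = c * (1 - (z - p) / (2 * v))"
      unfolding a_def using assms by (simp add: field_simps)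
    ultimately show ?thesis
      using measure_uniform01_atMost_le[of a] \<open>0 \<le> a\<close> by linarith
  qed
qed

lemma integral_won_value_strategyB_le:
  assumes "q > 0" "D > 0" "\<forall>b. w$b > 0" "\<forall>b. x$b \<ge> 0"
  shows "(\<integral>y. won_value w q p x y \<partial>strategyB w q p D) \<le> (\<Sum>b\<in>UNIV. w$b) / (2 * D) * (\<Sum>b\<in>UNIV. x$b)"
proof -
  have "(\<integral>y. won_value w q p x y \<partial>strategyB w q p D)
      = (\<Sum>b\<in>UNIV. w$b * measure uniform01 {..< x$b / (2 * share w D b)})"
    by (rule integral_won_value_strategyB[OF assms(1-3)])
  also have "\<dots> \<le> (\<Sum>b\<in>UNIV. w$b * (x$b / (2 * share w D b)))"
  proof (intro sum_mono mult_left_mono)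
    fix b
    have "0 \<le> x$b / (2 * share w D b)" using assms share_pos[OF assms(3,2), of b] by simp
    then show "measure uniform01 {..< x$b / (2 * share w D b)} \<le> x$b / (2 * share w D b)"
      using measure_uniform01_lessThan_le by (metis max.absorb2)
    show "0 \<le> w$b" using assms(3) by (simp add: less_imp_le)
  qed
  also have "\<dots> = (\<Sum>b\<in>UNIV. w$b) / (2 * D) * (\<Sum>b\<in>UNIV. x$b)"
    using weight_div_share[OF assms(3,2)] by (simp add: sum_distrib_left)
  finally show ?thesis .
qed

lemma integral_won_value_strategyA_ge:
  assumes "q > 0" "D > 0" "\<forall>b. w$b > 0" "0 < c" "c < 1" "\<forall>b. y$b \<ge> 0"
    and covers: "\<forall>b. c * p$b / (2 * share w D b) \<le> 1 - c"
  shows "c * (\<Sum>b\<in>UNIV. w$b) - c * (\<Sum>b\<in>UNIV. w$b) / (2 * D) * (q * (\<Sum>b\<in>UNIV. y$b) - (\<Sum>b\<in>UNIV. p$b))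
       \<le> (\<integral>x. won_value w q p x y \<partial>strategyA w D c)"
proof -
  define K where "K = (\<Sum>b\<in>UNIV. w$b) / (2 * D)"
  have "c * (\<Sum>b\<in>UNIV. w$b) - c * K * (q * (\<Sum>b\<in>UNIV. y$b) - (\<Sum>b\<in>UNIV. p$b))
      = (\<Sum>b\<in>UNIV. c * w$b - c * (K * (q * y$b - p$b)))"
    by (simp add: sum_subtractf sum_distrib_left right_diff_distrib mult.assoc)
  also have "\<dots> = (\<Sum>b\<in>UNIV. w$b * (c * (1 - (q * y$b - p$b) / (2 * share w D b))))"
  proof (rule sum.cong[OF refl])
    fix b
    have "w$b * ((q * y$b - p$b) / (2 * share w D b)) = K * (q * y$b - p$b)"
      unfolding K_def by (rule weight_div_share[OF assms(3,2)])
    moreover have "w$b * (c * (1 - (q * y$b - p$b) / (2 * share w D b)))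
        = c * w$b - c * (w$b * ((q * y$b - p$b) / (2 * share w D b)))"
      by (simp add: algebra_simps)
    ultimately show "c * w$b - c * (K * (q * y$b - p$b)) = w$b * (c * (1 - (q * y$b - p$b) / (2 * share w D b)))"
      by (simp only:)
  qed
  also have "\<dots> \<le> (\<Sum>b\<in>UNIV. w$b *
      measure uniform01 {s. (2 * share w D b / c) * max 0 (s - (1 - c)) + p$b > q * y$b})"
    using assms share_pos[OF assms(3,2)]
    by (intro sum_mono mult_left_mono measure_uniform01_allocA_wins_ge) (auto simp: less_imp_le)
  also have "\<dots> = (\<integral>x. won_value w q p x y \<partial>strategyA w D c)"
    by (rule integral_won_value_strategyA[symmetric])
  finally show ?thesis unfolding K_def by (simp add: mult.assoc)
qed

lemma payoffA_against_strategyB_le: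
  assumes "q > 0" "D > 0" "\<forall>b. w$b > 0" "RA \<ge> 0"
    and "feasible RA FA" "feasible RB (strategyB w q p D)"
  shows "payoffA w q p FA (strategyB w q p D) \<le> (\<Sum>b\<in>UNIV. w$b) * RA / (2 * D)"
proof -
  define K where "K = (\<Sum>b\<in>UNIV. w$b) / (2 * D)"
  have "0 < (\<Sum>b\<in>UNIV. w$b)" using assms(3) by (intro sum_pos) auto
  then have "K \<ge> 0" unfolding K_def using assms(2) by simp
  have "AE x in FA. \<forall>b. x$b \<ge> 0" using assms(5) unfolding feasible_def by auto
  then have "AE x in FA. (\<integral>y. won_value w q p x y \<partial>strategyB w q p D) \<le> K * (\<Sum>b\<in>UNIV. x$b)"
    unfolding K_def using integral_won_value_strategyB_le[OF assms(1-3)] by (auto elim!: eventually_mono)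
  then have "payoffA w q p FA (strategyB w q p D) \<le> (\<integral>x. K * (\<Sum>b\<in>UNIV. x$b) \<partial>FA)"
    unfolding payoffA_iterated_integrals(1)[OF assms(5,6)]
    using payoffA_iterated_integrals(3)[OF assms(5,6)] feasible_integrable_total(1)[OF assms(5)]
    by (intro integral_mono_AE) auto
  also have "\<dots> \<le> K * RA"
    using feasible_integrable_total(2)[OF assms(5,4)] \<open>K \<ge> 0\<close> by (simp add: mult_left_mono)
  finally show ?thesis unfolding K_def by simp
qed

lemma payoffA_of_strategyA_ge:
  assumes "q > 0" "D > 0" "\<forall>b. w$b > 0" "0 < c" "c < 1" "RB \<ge> 0" "D = q * RB - (\<Sum>b\<in>UNIV. p$b)"
    and "\<forall>b. c * p$b / (2 * share w D b) \<le> 1 - c"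
    and "feasible RA (strategyA w D c)" "feasible RB FB"
  shows "(\<Sum>b\<in>UNIV. w$b) * c / 2 \<le> payoffA w q p (strategyA w D c) FB"
proof -
  define K where "K = c * (\<Sum>b\<in>UNIV. w$b) / (2 * D)"
  define L where "L = (\<lambda>y::real^'a. c * (\<Sum>b\<in>UNIV. w$b) - K * (q * (\<Sum>b\<in>UNIV. y$b) - (\<Sum>b\<in>UNIV. p$b)))"
  interpret FB: prob_space FB using assms(10) unfolding feasible_def by auto
  have "0 < (\<Sum>b\<in>UNIV. w$b)" using assms(3) by (intro sum_pos) auto
  then have "K \<ge> 0" unfolding K_def using assms(2,4) by simp
  have "AE y in FB. \<forall>b. y$b \<ge> 0" using assms(10) unfolding feasible_def by auto
  then have "AE y in FB. L y \<le> (\<integral>x. won_value w q p x y \<partial>strategyA w D c)"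
    unfolding L_def K_def using integral_won_value_strategyA_ge[OF assms(1-5) _ assms(8)]
    by (auto elim!: eventually_mono)
  then have "(\<integral>y. L y \<partial>FB) \<le> payoffA w q p (strategyA w D c) FB"
    unfolding payoffA_iterated_integrals(2)[OF assms(9,10)] L_def
    using payoffA_iterated_integrals(4)[OF assms(9,10)] feasible_integrable_total(1)[OF assms(10)]
    by (intro integral_mono_AE) auto
  moreover have "(\<integral>y. L y \<partial>FB)
      = c * (\<Sum>b\<in>UNIV. w$b) - K * (q * (\<integral>y. (\<Sum>b\<in>UNIV. y$b) \<partial>FB)) + K * (\<Sum>b\<in>UNIV. p$b)"
    unfolding L_def using feasible_integrable_total(1)[OF assms(10)]
    by (simp add: FB.prob_space right_diff_distrib)
  moreover have "K * (q * (\<integral>y. (\<Sum>b\<in>UNIV. y$b) \<partial>FB)) \<le> K * (q * RB)"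
    using feasible_integrable_total(2)[OF assms(10,6)] \<open>K \<ge> 0\<close> assms(1)
    by (intro mult_left_mono) auto
  moreover have "K * (q * RB) - K * (\<Sum>b\<in>UNIV. p$b) = c * (\<Sum>b\<in>UNIV. w$b) / 2"
    unfolding K_def right_diff_distrib[symmetric] assms(7)[symmetric] using assms(2) by simp
  ultimately show ?thesis by (simp add: mult.commute)
qed

text \<open>Squaring the hypothesis \<open>2D - R\<^sub>A > R\<^sub>A \<surd>(1 + 2 W m / R\<^sub>A)\<close>, where \<open>m = max p\<^sub>b / w\<^sub>b\<close>.\<close>

lemma cond_ineq_imp_gap:
  fixes w p :: "real^'n"
  assumes "RA > 0" "\<forall>b. w$b > 0" "\<forall>b. p$b \<ge> 0" "cond_ineq w q P RA RB p"
  shows "RA < q * RB - P"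
    and "RA * (\<Sum>b\<in>UNIV. w$b) * (p$b / w$b) < 2 * (q * RB - P) * (q * RB - P - RA)"
proof -
  define W where "W = (\<Sum>b\<in>UNIV. w$b)"
  define D where "D = q * RB - P"
  define m where "m = (MAX b. p$b / w$b)"
  define S where "S = sqrt (1 + 2 * W / RA * m)"
  have "W > 0" unfolding W_def using assms by (intro sum_pos) auto
  have "p$b / w$b \<le> m" unfolding m_def by (rule Max_ge) auto
  moreover have "0 \<le> p$b / w$b" using assms by (simp add: less_imp_le)
  ultimately have "m \<ge> 0" by linarith
  then have S_sq: "S\<^sup>2 = 1 + 2 * W / RA * m" and "S \<ge> 1"
    unfolding S_def using \<open>W > 0\<close> assms(1) by simp_all
  have "RA * S < 2 * D - RA"
    using assms(1,4) unfolding cond_ineq_def D_def S_def W_def m_def by (simp add: field_simps)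
  moreover have "RA \<le> RA * S" using \<open>S \<ge> 1\<close> assms(1) by simp
  ultimately show "RA < q * RB - P" using D_def by linarith
  have "(RA * S)\<^sup>2 < (2 * D - RA)\<^sup>2"
    using \<open>RA * S < 2 * D - RA\<close> \<open>S \<ge> 1\<close> assms(1) by (intro power_strict_mono) auto
  then have "RA * W * m < 2 * D * (D - RA)"
    using S_sq assms(1) by (simp add: power_mult_distrib field_simps power2_eq_square)
  moreover have "RA * W * (p$b / w$b) \<le> RA * W * m"
    using \<open>p$b / w$b \<le> m\<close> \<open>W > 0\<close> assms(1) by (intro mult_left_mono) auto
  ultimately show "RA * (\<Sum>b\<in>UNIV. w$b) * (p$b / w$b) < 2 * (q * RB - P) * (q * RB - P - RA)"
    unfolding W_def D_def by linarith
qed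

lemma gap_imp_strategyA_covers:
  assumes "\<forall>b. w$b > 0" "D > 0" "RA * (\<Sum>b\<in>UNIV. w$b) * (p$b / w$b) < 2 * D * (D - RA)"
  shows "RA / D * p$b / (2 * share w D b) \<le> 1 - RA / D"
proof -
  have "(\<Sum>b\<in>UNIV. w$b) > 0" "w$b > 0" using assms(1) by (auto intro: sum_pos)
  then have "RA / D * p$b / (2 * share w D b) = RA * (\<Sum>b\<in>UNIV. w$b) * (p$b / w$b) / (2 * D\<^sup>2)"
    unfolding share_def using assms(2) by (simp add: field_simps power2_eq_square)
  also have "\<dots> \<le> 2 * D * (D - RA) / (2 * D\<^sup>2)"
    using assms(3) by (intro divide_right_mono) auto
  also have "\<dots> = 1 - RA / D" using assms(2) by (simp add: field_simps power2_eq_square)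
  finally show ?thesis .
qed

lemma piA_eq_if_cond_ineq:
  assumes "RA > 0" "RB > 0" "q > 0" "\<forall>b. w$b > 0"
    and "p \<in> preAlloc P" "cond_ineq w q P RA RB p"
  shows "piA w q p RA RB = (\<Sum>b\<in>UNIV. w$b) * RA / (2 * (q * RB - P))"
proof -
  define D where "D = q * RB - P"
  define c where "c = RA / D"
  have p: "\<forall>b. p$b \<ge> 0" "(\<Sum>b\<in>UNIV. p$b) = P" using assms(5) unfolding preAlloc_def by auto
  have "RA < D" unfolding D_def using cond_ineq_imp_gap(1)[OF assms(1,4) p(1) assms(6)] .
  then have "D > 0" "0 < c" "c < 1" "RA = D * c" unfolding c_def using assms(1) by auto
  have covers: "\<forall>b. c * p$b / (2 * share w D b) \<le> 1 - c"
    unfolding c_def D_def using cond_ineq_imp_gap(2)[OF assms(1,4) p(1) assms(6)]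
    by (intro allI gap_imp_strategyA_covers[OF assms(4)]) (use \<open>D > 0\<close> D_def in auto)
  have fA: "feasible RA (strategyA w D c)"
    using feasible_strategyA[OF \<open>0 < c\<close> \<open>c < 1\<close> \<open>D > 0\<close> assms(4) \<open>RA = D * c\<close>] .
  have fB: "feasible RB (strategyB w q p D)"
    using feasible_strategyB[OF assms(3) \<open>D > 0\<close> assms(4,5)] assms(3) unfolding D_def by simp
  have "D = q * RB - (\<Sum>b\<in>UNIV. p$b)" unfolding D_def p(2) ..
  have "(\<Sum>b\<in>UNIV. w$b) * RA / (2 * D) = (\<Sum>b\<in>UNIV. w$b) * c / 2"
    using \<open>RA = D * c\<close> \<open>D > 0\<close> by simp
  show ?thesis unfolding D_def[symmetric]
  proof (rule piA_eq_saddle_value[OF fA fB])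
    show "(\<Sum>b\<in>UNIV. w$b) * RA / (2 * D) \<le> payoffA w q p (strategyA w D c) FB'"
      if "feasible RB FB'" for FB'
      using payoffA_of_strategyA_ge[OF assms(3) \<open>D > 0\<close> assms(4) \<open>0 < c\<close> \<open>c < 1\<close> _
          \<open>D = q * RB - (\<Sum>b\<in>UNIV. p$b)\<close> covers fA that] assms(2)
        \<open>(\<Sum>b\<in>UNIV. w$b) * RA / (2 * D) = (\<Sum>b\<in>UNIV. w$b) * c / 2\<close> by linarith
    show "payoffA w q p FA' (strategyB w q p D) \<le> (\<Sum>b\<in>UNIV. w$b) * RA / (2 * D)"
      if "feasible RA FA'" for FA'
      using payoffA_against_strategyB_le[OF assms(3) \<open>D > 0\<close> assms(4) _ that fB] assms(1) by simp
  qed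
qed

lemma average_ratio_le_max_ratio:
  assumes "\<forall>b. w$b > 0" "p \<in> preAlloc P"
  shows "P / (\<Sum>b\<in>UNIV. w$b) \<le> (MAX b. p$b / w$b)"
proof -
  have "(\<Sum>b\<in>UNIV. w$b) > 0" using assms(1) by (intro sum_pos) auto
  have "P = (\<Sum>b\<in>UNIV. (p$b / w$b) * w$b)"
    using assms unfolding preAlloc_def by (simp add: less_imp_neq[symmetric])
  also have "\<dots> \<le> (\<Sum>b\<in>UNIV. (MAX b. p$b / w$b) * w$b)"
    using assms(1) by (intro sum_mono mult_right_mono Max_ge) (auto intro: less_imp_le)
  finally show ?thesis
    using \<open>(\<Sum>b\<in>UNIV. w$b) > 0\<close> by (simp add: sum_distrib_left[symmetric] divide_le_eq)
qed

lemma cond_ineq_proportional: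
  assumes "RA > 0" "\<forall>b. w$b > 0" "p \<in> preAlloc P" "cond_ineq w q P RA RB p"
  shows "cond_ineq w q P RA RB ((P / (\<Sum>b\<in>UNIV. w$b)) *\<^sub>R w)"
proof -
  define W where "W = (\<Sum>b\<in>UNIV. w$b)"
  define bound where "bound = (\<lambda>m. RA / 2 * (1 + sqrt (1 + 2 * W / RA * m)))"
  have "W > 0" unfolding W_def using assms(2) by (intro sum_pos) auto
  have "(\<lambda>b. ((P / W) *\<^sub>R w)$b / w$b) = (\<lambda>b. P / W)"
    using assms(2) by (auto simp: less_imp_neq[symmetric])
  then have "(MAX b. ((P / W) *\<^sub>R w)$b / w$b) = P / W" by (simp only:) simp
  moreover have "P / W \<le> (MAX b. p$b / w$b)"
    unfolding W_def by (rule average_ratio_le_max_ratio[OF assms(2,3)])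
  then have "bound (P / W) \<le> bound (MAX b. p$b / w$b)"
    unfolding bound_def using \<open>W > 0\<close> assms(1)
    by (intro mult_left_mono add_left_mono real_sqrt_le_mono mult_left_mono) auto
  moreover have "bound (MAX b. p$b / w$b) < q * RB - P"
    using assms(4) unfolding cond_ineq_def bound_def W_def .
  ultimately show ?thesis unfolding cond_ineq_def bound_def W_def[symmetric] by simp
qed

theorem mainTheorem5:
  fixes w p :: "real^'n" and P RA RB q :: real
  assumes "P > 0" and "RA > 0" and "RB > 0" and "q > 0"
    and "\<forall>b. w$b > 0"
  shows "(p \<in> preAlloc P \<and> cond_ineq w q P RA RB p \<longrightarrow>
           piA w q p RA RB = (\<Sum>b\<in>UNIV. w$b) * RA / (2 * (q * RB - P)))
       \<and> ((\<exists>p'\<in>preAlloc P. cond_ineq w q P RA RB p') \<longrightarrow>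
           cond_ineq w q P RA RB ((P / (\<Sum>b\<in>UNIV. w$b)) *\<^sub>R w))"
  using piA_eq_if_cond_ineq[OF assms(2-5)] cond_ineq_proportional[OF assms(2,5)] by blast

end
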